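(* Let $G$ be a finitely generated group such that $[e]_g$ is a subgroup of $G$ for every $g\in G$. Suppose that for every sequence $g_1,g_2,\dots$ of elements of $G$ the intersection $\bigcap_{k\ge1}[e]_{[g_1,\dots,g_k]}$ is trivial. Then for every $k\ge1$ either $\gamma_k(G)=\{e\}$ or $\gamma_k(G)\neq\gamma_{k+1}(G)$.
   Context: $[x,y]=x^{-1}y^{-1}xy$, left-normed commutators $[y_1,\dots,y_{m+1}]=[[y_1,\dots,y_m],y_{m+1}]$, $[y_1]=y_1$. For $g\in G$, $[e]_g=\{[x,g]\mid x\in G\}$. $\gamma_1(G)=G$, $\gamma_{k+1}(G)=[\gamma_k(G),G]$. *)

theory Defs
  imports "HOL-Algebra.Algebra"
begin

definition commutator :: "('a, 'b) monoid_scheme \<Rightarrow> 'a \<Rightarrow> 'a \<Rightarrow> 'a" where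
  "commutator G x y = inv\<^bsub>G\<^esub> x \<otimes>\<^bsub>G\<^esub> inv\<^bsub>G\<^esub> y \<otimes>\<^bsub>G\<^esub> x \<otimes>\<^bsub>G\<^esub> y"

fun lncomm :: "('a, 'b) monoid_scheme \<Rightarrow> (nat \<Rightarrow> 'a) \<Rightarrow> nat \<Rightarrow> 'a" where
  "lncomm G g 0 = g 0"
| "lncomm G g (Suc n) = commutator G (lncomm G g n) (g (Suc n))"

definition commset :: "('a, 'b) monoid_scheme \<Rightarrow> 'a \<Rightarrow> 'a set" where
  "commset G g = {commutator G x g | x. x \<in> carrier G}"

text \<open>Lower central series: gamma_1 = G, gamma_(k+1) = [gamma_k, G]
  (the subgroup generated by all [x,y] with x in gamma_k, y in G).
  The index 0 is not used; by convention it is also G.\<close>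
fun lower_central :: "('a, 'b) monoid_scheme \<Rightarrow> nat \<Rightarrow> 'a set" where
  "lower_central G 0 = carrier G"
| "lower_central G (Suc 0) = carrier G"
| "lower_central G (Suc (Suc k)) =
     generate G {commutator G x y | x y. x \<in> lower_central G (Suc k) \<and> y \<in> carrier G}"

definition finitely_generated :: "('a, 'b) monoid_scheme \<Rightarrow> bool" where
  "finitely_generated G \<longleftrightarrow> (\<exists>S. finite S \<and> S \<subseteq> carrier G \<and> generate G S = carrier G)"

end

theory Submission
  imports Defs
begin

text \<open>
  Suppose \<open>N = \<gamma>\<^sub>k(G)\<close> is nontrivial and \<open>N = [N, G]\<close>. Since \<open>G\<close> is finitely generated,
  \<open>N\<close> is the normal closure of finitely many elements, so by Zorn's lemma there is a normal
  subgroup \<open>M\<close> maximal among those not containing \<open>N\<close>; every normal subgroup properly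
  containing \<open>M\<close> then contains \<open>N\<close>. As \<open>N = [N, G] \<not>\<subseteq> M\<close>, some \<open>c \<in> N\<close> has \<open>[x, c] \<notin> M\<close>.
  The set \<open>[e]\<^sub>c\<close> is a subgroup, hence a normal one, so \<open>M[e]\<^sub>c\<close> is a normal subgroup
  properly containing \<open>M\<close>, and therefore contains \<open>c\<close>. Writing \<open>c = m [y, c]\<close> gives
  \<open>m = y\<inverse> c y\<close>, so \<open>c \<in> M\<close>, contradicting \<open>[x, c] \<notin> M\<close>.
\<close>

context group
begin

lemma mult_inv_cancel_left [simp]:
  "x \<in> carrier G \<Longrightarrow> y \<in> carrier G \<Longrightarrow> x \<otimes> (inv x \<otimes> y) = y"
  by (simp flip: m_assoc)

lemma inv_mult_cancel_left [simp]:
  "x \<in> carrier G \<Longrightarrow> y \<in> carrier G \<Longrightarrow> inv x \<otimes> (x \<otimes> y) = y"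
  by (simp flip: m_assoc)

lemma commutator_closed [simp]:
  "x \<in> carrier G \<Longrightarrow> y \<in> carrier G \<Longrightarrow> commutator G x y \<in> carrier G"
  by (simp add: commutator_def)

lemma inv_commutator:
  "x \<in> carrier G \<Longrightarrow> y \<in> carrier G \<Longrightarrow> inv (commutator G x y) = commutator G y x"
  by (simp add: commutator_def inv_mult_group m_assoc)

lemma commutator_mult_left:
  "g \<in> carrier G \<Longrightarrow> h \<in> carrier G \<Longrightarrow> x \<in> carrier G \<Longrightarrow>
    commutator G (g \<otimes> h) x = inv h \<otimes> commutator G g x \<otimes> h \<otimes> commutator G h x"
  by (simp add: commutator_def inv_mult_group m_assoc)

lemma commutator_inv_left:
  "g \<in> carrier G \<Longrightarrow> x \<in> carrier G \<Longrightarrow>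
    commutator G (inv g) x = g \<otimes> inv (commutator G g x) \<otimes> inv g"
  by (simp add: commutator_def inv_mult_group m_assoc)

lemma commutator_conj_left:
  "g \<in> carrier G \<Longrightarrow> h \<in> carrier G \<Longrightarrow> y \<in> carrier G \<Longrightarrow>
    commutator G (h \<otimes> g \<otimes> inv h) y = h \<otimes> commutator G g (inv h \<otimes> y \<otimes> h) \<otimes> inv h"
  by (simp add: commutator_def inv_mult_group m_assoc)

lemma conj_commutator:
  "c \<in> carrier G \<Longrightarrow> h \<in> carrier G \<Longrightarrow> x \<in> carrier G \<Longrightarrow>
    h \<otimes> commutator G x c \<otimes> inv h = commutator G (x \<otimes> inv h) c \<otimes> inv (commutator G (inv h) c)"
  by (simp add: commutator_def inv_mult_group m_assoc)

lemma mult_inv_commutator_right: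
  "c \<in> carrier G \<Longrightarrow> y \<in> carrier G \<Longrightarrow> c \<otimes> inv (commutator G y c) = inv y \<otimes> c \<otimes> y"
  by (simp add: commutator_def inv_mult_group m_assoc)

lemma commutator_mem_normal_swap:
  assumes "M \<lhd> G" "x \<in> carrier G" "y \<in> carrier G" "commutator G x y \<in> M"
  shows "commutator G y x \<in> M"
  using assms normal_imp_subgroup subgroup.m_inv_closed by (metis inv_commutator)

text \<open>\<open>center_mod M\<close> is the preimage of the centre of \<open>G/M\<close>.\<close>

definition center_mod :: "'a set \<Rightarrow> 'a set" where
  "center_mod M = {g \<in> carrier G. \<forall>x \<in> carrier G. commutator G g x \<in> M}"

lemma subgroup_commutator_mem_normal:
  assumes M: "M \<lhd> G" and x: "x \<in> carrier G"
  shows "subgroup {g \<in> carrier G. commutator G g x \<in> M} G"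
proof (rule subgroupI)
  interpret normal M G by fact
  show "{g \<in> carrier G. commutator G g x \<in> M} \<noteq> {}"
    using x by (auto simp: commutator_def intro!: exI[of _ \<one>])
  fix a assume a: "a \<in> {g \<in> carrier G. commutator G g x \<in> M}"
  then have "a \<otimes> inv (commutator G a x) \<otimes> inv a \<in> M"
    using inv_op_closed2 x by simp
  then show "inv a \<in> {g \<in> carrier G. commutator G g x \<in> M}"
    using a x by (simp add: commutator_inv_left)
next
  interpret normal M G by fact
  fix a b assume a: "a \<in> {g \<in> carrier G. commutator G g x \<in> M}"
    and b: "b \<in> {g \<in> carrier G. commutator G g x \<in> M}"
  then have "inv b \<otimes> commutator G a x \<otimes> b \<otimes> commutator G b x \<in> M"
    using inv_op_closed1 by simp
  then show "a \<otimes> b \<in> {g \<in> carrier G. commutator G g x \<in> M}"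
    using a b x by (simp add: commutator_mult_left)
qed auto

lemma center_mod_eq_Inter:
  "center_mod M = (\<Inter>x \<in> carrier G. {g \<in> carrier G. commutator G g x \<in> M})"
  using one_closed by (auto simp: center_mod_def)

lemma normal_center_mod:
  assumes M: "M \<lhd> G"
  shows "center_mod M \<lhd> G"
proof -
  have "subgroup (center_mod M) G"
    unfolding center_mod_eq_Inter
    by (rule subgroups_Inter) (use one_closed subgroup_commutator_mem_normal[OF M] in auto)
  then show ?thesis
    unfolding normal_inv_iff
  proof (intro conjI ballI)
    fix h g assume h: "h \<in> carrier G" and g: "g \<in> center_mod M"
    then have gc: "g \<in> carrier G" by (simp add: center_mod_def)
    have "commutator G (h \<otimes> g \<otimes> inv h) y \<in> M" if y: "y \<in> carrier G" for y
    proof -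
      have "commutator G g (inv h \<otimes> y \<otimes> h) \<in> M"
        using g h y by (simp add: center_mod_def)
      then have "h \<otimes> commutator G g (inv h \<otimes> y \<otimes> h) \<otimes> inv h \<in> M"
        using normal.inv_op_closed2[OF M] h y gc by simp
      then show ?thesis
        using h y gc by (simp add: commutator_conj_left)
    qed
    then show "h \<otimes> g \<otimes> inv h \<in> center_mod M"
      using h gc by (simp add: center_mod_def)
  qed
qed

lemma normal_subset_center_mod:
  assumes M: "M \<lhd> G"
  shows "M \<subseteq> center_mod M"
proof
  interpret normal M G by fact
  fix m assume m: "m \<in> M"
  have "commutator G m x \<in> M" if x: "x \<in> carrier G" for x
  proof -
    have "inv m \<otimes> (inv x \<otimes> m \<otimes> x) \<in> M"
      using inv_op_closed1 x m by simp
    then show ?thesis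
      using m x by (simp add: commutator_def m_assoc)
  qed
  then show "m \<in> center_mod M"
    using m by (simp add: center_mod_def)
qed

lemma commutator_subset_iff_subset_center_mod:
  assumes "H \<subseteq> carrier G"
  shows "{commutator G x y | x y. x \<in> H \<and> y \<in> carrier G} \<subseteq> M \<longleftrightarrow> H \<subseteq> center_mod M"
  using assms by (auto simp: center_mod_def)

lemma normal_commset:
  assumes c: "c \<in> carrier G" and sub: "subgroup (commset G c) G"
  shows "commset G c \<lhd> G"
  unfolding normal_inv_iff
proof (intro conjI sub ballI)
  fix h a assume h: "h \<in> carrier G" and "a \<in> commset G c"
  then obtain x where x: "x \<in> carrier G" and a: "a = commutator G x c"
    by (auto simp: commset_def)
  have "commutator G (x \<otimes> inv h) c \<in> commset G c" "commutator G (inv h) c \<in> commset G c"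
    using h x by (auto simp: commset_def)
  then have "commutator G (x \<otimes> inv h) c \<otimes> inv (commutator G (inv h) c) \<in> commset G c"
    using sub subgroup.m_closed subgroup.m_inv_closed by metis
  then show "h \<otimes> a \<otimes> inv h \<in> commset G c"
    using h x c a by (simp add: conj_commutator)
qed

lemma normal_Union_chain:
  assumes "C \<noteq> {}" and "subset.chain {M. M \<lhd> G} C"
  shows "\<Union>C \<lhd> G"
proof -
  have normal: "\<And>M. M \<in> C \<Longrightarrow> M \<lhd> G"
    and chain: "\<And>U V. U \<in> C \<Longrightarrow> V \<in> C \<Longrightarrow> U \<subseteq> V \<or> V \<subseteq> U"
    using assms(2) by (auto simp: subset_chain_def)
  have sub: "\<And>M. M \<in> C \<Longrightarrow> subgroup M G"
    using normal normal_imp_subgroup by blast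
  show ?thesis
    unfolding normal_inv_iff
  proof (intro conjI ballI)
    show "subgroup (\<Union>C) G"
    proof (rule subgroupI)
      show "\<Union>C \<subseteq> carrier G"
        by (meson Union_least sub subgroup.subset)
      obtain U where "U \<in> C"
        using assms(1) by blast
      then show "\<Union>C \<noteq> {}"
        using subgroup.one_closed[OF sub] by blast
    next
      fix a assume "a \<in> \<Union>C"
      then obtain U where "U \<in> C" "a \<in> U"
        by blast
      then show "inv a \<in> \<Union>C"
        using subgroup.m_inv_closed[OF sub] by blast
    next
      fix a b assume "a \<in> \<Union>C" "b \<in> \<Union>C"
      then obtain U V where U: "U \<in> C" "a \<in> U" and V: "V \<in> C" "b \<in> V"
        by blast
      then have "a \<otimes> b \<in> U \<or> a \<otimes> b \<in> V"
        using chain[OF U(1) V(1)] subgroup.m_closed[OF sub[OF U(1)]] subgroup.m_closed[OF sub[OF V(1)]]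
        by blast
      then show "a \<otimes> b \<in> \<Union>C"
        using U V by blast
    qed
  next
    fix h a assume h: "h \<in> carrier G" and "a \<in> \<Union>C"
    then obtain U where "U \<in> C" "a \<in> U"
      by blast
    then show "h \<otimes> a \<otimes> inv h \<in> \<Union>C"
      using normal.inv_op_closed2[OF normal h] by blast
  qed
qed

text \<open>Zorn applies because a finite set inside the union of a chain lies inside one member.\<close>

lemma maximal_normal_avoiding_finite:
  assumes "finite F" and "\<not> F \<subseteq> {\<one>}"
  obtains M where "M \<lhd> G" "\<not> F \<subseteq> M"
    "\<And>W. W \<lhd> G \<Longrightarrow> M \<subseteq> W \<Longrightarrow> \<not> F \<subseteq> W \<Longrightarrow> W = M"
proof -
  define A where "A = {M. M \<lhd> G \<and> \<not> F \<subseteq> M}"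
  have "{\<one>} \<in> A"
    using assms(2) one_is_normal by (simp add: A_def)
  then have "\<exists>M \<in> A. \<forall>W \<in> A. M \<subseteq> W \<longrightarrow> W = M"
  proof (intro subset_Zorn_nonempty)
    fix C assume C: "C \<noteq> {}" "subset.chain A C"
    then have "subset.chain {M. M \<lhd> G} C"
      by (auto simp: A_def subset_chain_def)
    moreover have "\<not> F \<subseteq> \<Union>C"
      using finite_subset_Union_chain[OF assms(1) _ C] C(2)
      by (auto simp: A_def subset_chain_def)
    ultimately show "\<Union>C \<in> A"
      using normal_Union_chain C(1) by (simp add: A_def)
  qed auto
  then show thesis
    using that by (auto simp: A_def)
qed

lemma subgroup_lower_central: "subgroup (lower_central G (Suc i)) G"
proof (induction i)
  case 0
  then show ?case by (simp add: subgroup_self)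
next
  case (Suc i)
  then show ?case
    using subgroup.subset by (fastforce intro: generate_is_subgroup)
qed

text \<open>If \<open>\<gamma>\<^sub>i(G)\<close> is the normal closure of \<open>F\<close>, then \<open>\<gamma>\<^sub>i\<^sub>+\<^sub>1(G)\<close> is the normal closure of
  \<open>[F, S]\<close>: since the \<open>g\<close> with \<open>[g, f] \<in> M\<close> form a subgroup, \<open>[f, S] \<subseteq> M\<close> already
  forces \<open>f \<in> center_mod M\<close>.\<close>

lemma lower_central_finite_normal_closure:
  assumes S: "finite S" "S \<subseteq> carrier G" "generate G S = carrier G"
  shows "\<exists>F. finite F \<and> F \<subseteq> lower_central G (Suc i) \<and>
    (\<forall>M. M \<lhd> G \<longrightarrow> F \<subseteq> M \<longrightarrow> lower_central G (Suc i) \<subseteq> M)"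
proof (induction i)
  case 0
  have "lower_central G (Suc 0) \<subseteq> M" if "M \<lhd> G" "S \<subseteq> M" for M
    using generate_subgroup_incl[OF that(2) normal_imp_subgroup[OF that(1)]] S(3) by simp
  then show ?case
    using S by auto
next
  case (Suc i)
  let ?N = "lower_central G (Suc i)"
  obtain F where F: "finite F" "F \<subseteq> ?N" "\<And>M. M \<lhd> G \<Longrightarrow> F \<subseteq> M \<Longrightarrow> ?N \<subseteq> M"
    using Suc.IH by blast
  have N: "?N \<subseteq> carrier G"
    using subgroup.subset[OF subgroup_lower_central] .
  define F' where "F' = (\<lambda>(f, s). commutator G f s) ` (F \<times> S)"
  have "finite F'"
    using F(1) S(1) by (simp add: F'_def)
  moreover have "F' \<subseteq> lower_central G (Suc (Suc i))"
    using F(2) S(2) by (auto simp: F'_def intro!: generate.incl)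
  moreover have "lower_central G (Suc (Suc i)) \<subseteq> M" if M: "M \<lhd> G" and F'M: "F' \<subseteq> M" for M
  proof -
    have "f \<in> center_mod M" if f: "f \<in> F" for f
    proof -
      have fc: "f \<in> carrier G"
        using f F(2) N by blast
      have "S \<subseteq> {g \<in> carrier G. commutator G g f \<in> M}"
        using F'M f S(2) fc commutator_mem_normal_swap[OF M]
        by (fastforce simp: F'_def)
      then have "generate G S \<subseteq> {g \<in> carrier G. commutator G g f \<in> M}"
        by (rule generate_subgroup_incl[OF _ subgroup_commutator_mem_normal[OF M fc]])
      then show ?thesis
        using S(3) fc commutator_mem_normal_swap[OF M] by (auto simp: center_mod_def)
    qed
    then have "?N \<subseteq> center_mod M"
      using F(3)[OF normal_center_mod[OF M]] by blast
    then show ?thesis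
      using commutator_subset_iff_subset_center_mod[OF N]
        generate_subgroup_incl[OF _ normal_imp_subgroup[OF M]]
      by simp
  qed
  ultimately show ?case
    by (intro exI[of _ F']) blast
qed

lemma mem_normal_if_mem_set_mult_commset:
  assumes M: "M \<lhd> G" and c: "c \<in> carrier G" and "c \<in> M <#> commset G c"
  shows "c \<in> M"
proof -
  interpret M: normal M G by fact
  obtain m a where m: "m \<in> M" and a: "a \<in> commset G c" and cma: "c = m \<otimes> a"
    using assms(3) unfolding set_mult_def by blast
  obtain y where y: "y \<in> carrier G" and ay: "a = commutator G y c"
    using a unfolding commset_def by blast
  have "a \<in> carrier G"
    using y c by (simp add: ay)
  then have "m = c \<otimes> inv a"
    using m by (simp add: cma m_assoc)
  also have "\<dots> = inv y \<otimes> c \<otimes> y"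
    using y c by (simp add: ay mult_inv_commutator_right)
  finally have "y \<otimes> m \<otimes> inv y = c"
    using y c by (simp add: m_assoc)
  then show ?thesis
    using M.inv_op_closed2[OF y m] by simp
qed

lemma subset_normal_if_subset_center_mod:
  assumes M: "M \<lhd> G" and "N \<subseteq> carrier G"
    and stable: "N = generate G {commutator G x y | x y. x \<in> N \<and> y \<in> carrier G}"
    and "N \<subseteq> center_mod M"
  shows "N \<subseteq> M"
proof -
  have "{commutator G x y | x y. x \<in> N \<and> y \<in> carrier G} \<subseteq> M"
    using assms(2,4) commutator_subset_iff_subset_center_mod by blast
  then show ?thesis
    by (subst stable) (rule generate_subgroup_incl[OF _ normal_imp_subgroup[OF M]])
qed

lemma normal_closure_finite_eq_commutator_imp_trivial:
  assumes sub: "subgroup N G"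
    and stable: "N = generate G {commutator G x y | x y. x \<in> N \<and> y \<in> carrier G}"
    and F: "finite F" "F \<subseteq> N" "\<And>M. M \<lhd> G \<Longrightarrow> F \<subseteq> M \<Longrightarrow> N \<subseteq> M"
    and commset: "\<And>g. g \<in> carrier G \<Longrightarrow> subgroup (commset G g) G"
  shows "N = {\<one>}"
proof (rule ccontr)
  assume "N \<noteq> {\<one>}"
  then have "\<not> F \<subseteq> {\<one>}"
    using F(3) one_is_normal subgroup.one_closed[OF sub] by blast
  then obtain M where M: "M \<lhd> G" and FM: "\<not> F \<subseteq> M"
    and maximal: "\<And>W. W \<lhd> G \<Longrightarrow> M \<subseteq> W \<Longrightarrow> \<not> F \<subseteq> W \<Longrightarrow> W = M"
    using maximal_normal_avoiding_finite[OF F(1)] by blast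
  have "\<not> N \<subseteq> M"
    using FM F(2) by blast
  then have "\<not> N \<subseteq> center_mod M"
    using subset_normal_if_subset_center_mod[OF M subgroup.subset[OF sub] stable] by blast
  then obtain c where cN: "c \<in> N" and c: "c \<notin> center_mod M"
    by blast
  have cc: "c \<in> carrier G"
    using cN subgroup.subset[OF sub] by blast
  obtain x where x: "x \<in> carrier G" and xcM: "commutator G x c \<notin> M"
    using c cc commutator_mem_normal_swap[OF M] by (auto simp: center_mod_def)
  define L where "L = M <#> commset G c"
  have L: "L \<lhd> G"
    unfolding L_def
    using normal_subgroup_set_mult_closed[OF M normal_commset[OF cc commset[OF cc]]] .
  have "second_isomorphism_grp M G (commset G c)"
    using M commset[OF cc]
    by (simp add: second_isomorphism_grp_def second_isomorphism_grp_axioms_def)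
  then have M_L: "M \<subseteq> L" and "commset G c \<subseteq> L"
    unfolding L_def
    by (rule second_isomorphism_grp.H_contained_in_set_mult,
        rule second_isomorphism_grp.S_contained_in_set_mult)
  moreover have "commutator G x c \<in> commset G c"
    using x unfolding commset_def by blast
  ultimately have "L \<noteq> M"
    using xcM by blast
  then have "F \<subseteq> L"
    using maximal[OF L M_L] by blast
  then have "c \<in> L"
    using F(3)[OF L] cN by blast
  then have "c \<in> M"
    unfolding L_def by (rule mem_normal_if_mem_set_mult_commset[OF M cc])
  then show False
    using c normal_subset_center_mod[OF M] by blast
qed

lemma lower_central_stable_imp_trivial:
  assumes "finitely_generated G"
    and "\<And>g. g \<in> carrier G \<Longrightarrow> subgroup (commset G g) G"
    and stable: "lower_central G (Suc (Suc i)) = lower_central G (Suc i)"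
  shows "lower_central G (Suc i) = {\<one>}"
proof -
  obtain S where S: "finite S" "S \<subseteq> carrier G" "generate G S = carrier G"
    using assms(1) by (auto simp: finitely_generated_def)
  obtain F where F: "finite F" "F \<subseteq> lower_central G (Suc i)"
    and closure: "\<forall>M. M \<lhd> G \<longrightarrow> F \<subseteq> M \<longrightarrow> lower_central G (Suc i) \<subseteq> M"
    using lower_central_finite_normal_closure[OF S, of i] by blast
  have "lower_central G (Suc i) =
      generate G {commutator G x y | x y. x \<in> lower_central G (Suc i) \<and> y \<in> carrier G}"
    using stable by simp
  from normal_closure_finite_eq_commutator_imp_trivial[OF subgroup_lower_central this F
      closure[rule_format] assms(2)]
  show ?thesis .
qed

end

theorem mainTheorem8:
  fixes G :: "('a, 'b) monoid_scheme"
  assumes "group G"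
    and "finitely_generated G"
    and "\<forall>g \<in> carrier G. subgroup (commset G g) G"
    and "\<forall>g. (\<forall>i. g i \<in> carrier G) \<longrightarrow> (\<Inter>n. commset G (lncomm G g n)) = {\<one>\<^bsub>G\<^esub>}"
  shows "\<forall>k \<ge> 1. lower_central G k = {\<one>\<^bsub>G\<^esub>} \<or> lower_central G k \<noteq> lower_central G (Suc k)"
proof (intro allI impI)
  fix k :: nat assume "k \<ge> 1"
  then obtain i where k: "k = Suc i"
    by (cases k) auto
  show "lower_central G k = {\<one>\<^bsub>G\<^esub>} \<or> lower_central G k \<noteq> lower_central G (Suc k)"
  proof (rule disjCI)
    assume "\<not> lower_central G k \<noteq> lower_central G (Suc k)"
    with k show "lower_central G k = {\<one>\<^bsub>G\<^esub>}"
      using group.lower_central_stable_imp_trivial[OF assms(1,2)] assms(3) by simp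
  qed
qed

end
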